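(* Let $\tilde X(t)=V(t-t_0)$ for $t\ge t_0$, where $V\sim\mathcal{N}(0,I_d)$, and let $D_c$ be the closed unit ball of $\mathbb{R}^d$ centred at $0$. Then for $\alpha>0$ the unique continuous solution of $$f(t)=\alpha\mu_{\tilde X(t)}(D_c)-\alpha\int_{t_0}^t\mu_{\tilde X(t)\mid\tilde X(u)\in D_c}(D_c)f(u)\,du,\quad t>t_0,$$ is $f(t)=\alpha e^{-\alpha(t-t_0)}F_{\chi^2_d}\{(t-t_0)^{-2}\}$, and $\int_{t_0}^\infty f(t)\,dt<1$, i.e. the corresponding capture time satisfies $\mathbb{P}(T_c=\infty)>0$.
   Context: $F_{\chi^2_d}$ is the cumulative distribution function of the chi-squared distribution with $d$ degrees of freedom. $\mu_{\tilde X(t)\mid\tilde X(u)\in D_c}(D_c)=\mu_{\tilde X(t),\tilde X(u)}(D_c\times D_c)/\mu_{\tilde X(u)}(D_c)$. The capture time $T_c$ has density $f$ on $(t_0,\infty)$ and $\mathbb{P}(T_c=\infty)=1-\int_{t_0}^\infty f$. *)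

theory Defs
  imports "HOL-Probability.Probability"
begin

definition std_gauss :: "('a::euclidean_space) measure" where
  "std_gauss = density lborel
     (\<lambda>x. ennreal ((2 * pi) powr (- real DIM('a) / 2) * exp (- (norm x)\<^sup>2 / 2)))"

text \<open>Law of Xtilde(t) = V (t - t0), V ~ N(0,I_d): mu_{X(t)}(D) = P(V (t - t0) in D).\<close>
definition lawX :: "real \<Rightarrow> real \<Rightarrow> 'a::euclidean_space set \<Rightarrow> real" where
  "lawX t0 t D = measure (std_gauss :: 'a measure) {v \<in> space std_gauss. (t - t0) *\<^sub>R v \<in> D}"

definition lawXX :: "real \<Rightarrow> real \<Rightarrow> real \<Rightarrow> 'a::euclidean_space set \<Rightarrow> real" where
  "lawXX t0 t u D = measure (std_gauss :: 'a measure)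
     {v \<in> space std_gauss. (t - t0) *\<^sub>R v \<in> D \<and> (u - t0) *\<^sub>R v \<in> D}"

definition condlaw :: "real \<Rightarrow> real \<Rightarrow> real \<Rightarrow> 'a::euclidean_space set \<Rightarrow> real" where
  "condlaw t0 t u D = lawXX t0 t u D / (lawX t0 u D :: real)"

definition chi2_density :: "nat \<Rightarrow> real \<Rightarrow> real" where
  "chi2_density d x = (if x > 0 then x powr (real d / 2 - 1) * exp (- x / 2)
       / (2 powr (real d / 2) * Gamma (real d / 2)) else 0)"

definition chi2_cdf :: "nat \<Rightarrow> real \<Rightarrow> real" where
  "chi2_cdf d x = (LBINT y=0..x. chi2_density d y)"

end

theory Submission
  imports Defs "HOL-Real_Asymp.Real_Asymp"
begin

text \<open>
  For \<open>t > t0\<close> the event \<open>X(t) \<in> D_c\<close> is \<open>|V| \<le> 1 / (t - t0)\<close>, so its probability \<open>g t\<close>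
  is \<open>P(|V|^2 \<le> (t - t0)^-2) = F_chi2((t - t0)^-2)\<close>. The chi-squared identification comes from
  differentiating \<open>r \<mapsto> P(|V| \<le> r)\<close>: on a thin spherical shell the Gaussian density is squeezed
  between its values on the two bounding spheres. The events decrease in \<open>t\<close>, so the conditional
  kernel is \<open>g t / g u\<close>, and dividing the equation by \<open>g t\<close> leaves \<open>h t = \<alpha> - \<alpha> \<integral>\<^sub>t\<^sub>0\<^sup>t h\<close>
  for \<open>h = f / g\<close>, whose only continuous solution is \<open>\<alpha> exp (- \<alpha> (t - t0))\<close>. Finally
  \<open>g t \<le> P(|V| \<le> 1) < 1\<close> once \<open>t > t0 + 1\<close>, so the mass of \<open>f = \<alpha> exp (- \<alpha> (t - t0)) g t\<close>
  stays strictly below that of the exponential density.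
\<close>

lemma sets_std_gauss [simp, measurable_cong]: "sets std_gauss = sets borel"
  by (simp add: std_gauss_def)

lemma space_std_gauss [simp]: "space std_gauss = UNIV"
  by (simp add: std_gauss_def)

lemma prob_space_std_gauss: "prob_space (std_gauss :: 'a::euclidean_space measure)"
proof (rule prob_spaceI)
  let ?k = "(2 * pi) powr (- real DIM('a) / 2)"
  have "emeasure (std_gauss::'a measure) (space std_gauss)
     = (\<integral>\<^sup>+ x. ennreal (?k * exp (- (norm (x::'a))\<^sup>2 / 2)) \<partial>lborel)"
    by (simp add: std_gauss_def emeasure_density)
  also have "\<dots> = (\<integral>\<^sup>+ f. ennreal (?k * exp (- (norm (\<Sum>b\<in>Basis. f b *\<^sub>R b :: 'a))\<^sup>2 / 2))
      \<partial>(\<Pi>\<^sub>M b\<in>Basis. lborel))"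
    by (subst lborel_eq) (simp add: nn_integral_distr)
  also have "\<dots> = (\<integral>\<^sup>+ f. (\<Prod>b\<in>(Basis::'a set). ennreal (std_normal_density (f b)))
      \<partial>(\<Pi>\<^sub>M b\<in>Basis. lborel))"
  proof (intro nn_integral_cong)
    fix f :: "'a \<Rightarrow> real"
    have norm_sq: "(norm (\<Sum>b\<in>Basis. f b *\<^sub>R b :: 'a))\<^sup>2 = (\<Sum>b\<in>(Basis::'a set). (f b)\<^sup>2)"
      unfolding power2_norm_eq_inner by (subst euclidean_inner) (simp add: power2_eq_square)
    have const: "?k = (\<Prod>b\<in>(Basis::'a set). 1 / sqrt (2 * pi))"
    proof -
      have "?k = ((2*pi) powr (1/2)) powr (- real DIM('a))"
        by (simp add: powr_powr)
      also have "\<dots> = inverse (sqrt (2*pi) ^ DIM('a))"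
        by (simp add: powr_half_sqrt powr_minus powr_realpow)
      finally show ?thesis
        by (simp add: power_one_over inverse_eq_divide)
    qed
    have "exp (- (\<Sum>b\<in>(Basis::'a set). (f b)\<^sup>2) / 2) = (\<Prod>b\<in>(Basis::'a set). exp (- (f b)\<^sup>2 / 2))"
      by (simp add: exp_sum[symmetric] sum_negf sum_divide_distrib)
    then have "?k * exp (- (norm (\<Sum>b\<in>Basis. f b *\<^sub>R b :: 'a))\<^sup>2 / 2)
        = (\<Prod>b\<in>(Basis::'a set). std_normal_density (f b))"
      unfolding norm_sq const std_normal_density_def prod.distrib by simp
    then show "ennreal (?k * exp (- (norm (\<Sum>b\<in>Basis. f b *\<^sub>R b :: 'a))\<^sup>2 / 2))
       = (\<Prod>b\<in>(Basis::'a set). ennreal (std_normal_density (f b)))"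
      by (simp add: prod_ennreal)
  qed
  also have "\<dots> = (\<Prod>b\<in>(Basis::'a set). \<integral>\<^sup>+ x. ennreal (std_normal_density x) \<partial>lborel)"
    by (rule product_sigma_finite.product_nn_integral_prod)
       (auto simp: product_sigma_finite_def sigma_finite_lborel)
  also have "\<dots> = 1"
    using prob_space_normal_density[of 1 0]
    by (simp add: prob_space_def prob_space_axioms_def emeasure_density)
  finally show "emeasure (std_gauss::'a measure) (space std_gauss) = 1" .
qed

interpretation std_gauss: prob_space "std_gauss :: 'a::euclidean_space measure"
  by (rule prob_space_std_gauss)

definition gauss_radial :: "nat \<Rightarrow> real \<Rightarrow> real" where
  "gauss_radial d r = (2 * pi) powr (- real d / 2) * exp (- r\<^sup>2 / 2)"

lemma gauss_radial_pos: "0 < gauss_radial d r"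
  by (simp add: gauss_radial_def)

lemma gauss_radial_antimono: "0 \<le> r \<Longrightarrow> r \<le> r' \<Longrightarrow> gauss_radial d r' \<le> gauss_radial d r"
  by (simp add: gauss_radial_def power_mono)

lemma emeasure_std_gauss:
  "S \<in> sets borel \<Longrightarrow>
     emeasure (std_gauss :: 'a::euclidean_space measure) S
       = (\<integral>\<^sup>+ x. ennreal (gauss_radial DIM('a) (norm x)) * indicator S x \<partial>lborel)"
  unfolding std_gauss_def gauss_radial_def by (rule emeasure_density) auto

lemma emeasure_std_gauss_bounds:
  fixes S :: "'a::euclidean_space set"
  assumes S: "S \<in> sets borel" and a: "0 \<le> a" and ab: "\<And>x. x \<in> S \<Longrightarrow> a \<le> norm x \<and> norm x \<le> b"
  shows "ennreal (gauss_radial DIM('a) b) * emeasure lborel S \<le> emeasure std_gauss S"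
    and "emeasure std_gauss S \<le> ennreal (gauss_radial DIM('a) a) * emeasure lborel S"
proof -
  have "(\<integral>\<^sup>+ x. ennreal (gauss_radial DIM('a) b) * indicator S x \<partial>lborel)
      \<le> (\<integral>\<^sup>+ x. ennreal (gauss_radial DIM('a) (norm x)) * indicator S x \<partial>lborel)"
    using a ab by (intro nn_integral_mono)
      (auto split: split_indicator intro!: ennreal_leI gauss_radial_antimono)
  then show "ennreal (gauss_radial DIM('a) b) * emeasure lborel S \<le> emeasure std_gauss S"
    using S by (simp add: emeasure_std_gauss nn_integral_cmult_indicator)
  have "(\<integral>\<^sup>+ x. ennreal (gauss_radial DIM('a) (norm x)) * indicator S x \<partial>lborel)
      \<le> (\<integral>\<^sup>+ x. ennreal (gauss_radial DIM('a) a) * indicator S x \<partial>lborel)"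
    using a ab by (intro nn_integral_mono)
      (auto split: split_indicator intro!: ennreal_leI gauss_radial_antimono)
  then show "emeasure std_gauss S \<le> ennreal (gauss_radial DIM('a) a) * emeasure lborel S"
    using S by (simp add: emeasure_std_gauss nn_integral_cmult_indicator)
qed

definition ball_volume :: "nat \<Rightarrow> real \<Rightarrow> real" where
  "ball_volume d r = unit_ball_vol (real d) * r ^ d"

lemma ball_volume_mono: "0 \<le> r \<Longrightarrow> r \<le> r' \<Longrightarrow> ball_volume d r \<le> ball_volume d r'"
  unfolding ball_volume_def by (intro mult_left_mono power_mono) auto

lemma ball_volume_strict_mono:
  "0 \<le> r \<Longrightarrow> r < r' \<Longrightarrow> 0 < d \<Longrightarrow> ball_volume d r < ball_volume d r'"
  unfolding ball_volume_def by (intro mult_strict_left_mono power_strict_mono) auto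

lemma ball_volume_zero [simp]: "0 < d \<Longrightarrow> ball_volume d 0 = 0"
  by (simp add: ball_volume_def)

lemma has_real_derivative_ball_volume:
  "(ball_volume d has_real_derivative unit_ball_vol (real d) * (real d * r ^ (d - 1))) (at r)"
  unfolding ball_volume_def by (auto intro!: derivative_eq_intros)

lemma emeasure_lborel_shell:
  assumes "0 \<le> r" "r \<le> r'"
  shows "emeasure lborel (cball (0::'a::euclidean_space) r' - cball 0 r)
    = ennreal (ball_volume DIM('a) r' - ball_volume DIM('a) r)"
proof -
  have "emeasure lborel (cball (0::'a) r' - cball 0 r)
      = emeasure lborel (cball (0::'a) r') - emeasure lborel (cball (0::'a) r)"
    using assms by (intro emeasure_Diff) (auto simp: emeasure_cball)
  then show ?thesis
    using assms by (simp add: emeasure_cball ball_volume_def ennreal_minus)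
qed

definition gauss_ball :: "'a::euclidean_space itself \<Rightarrow> real \<Rightarrow> real" where
  "gauss_ball _ r = measure (std_gauss :: 'a measure) (cball 0 r)"

lemma gauss_ball_nonneg: "0 \<le> gauss_ball T r"
  by (simp add: gauss_ball_def)

lemma gauss_ball_le_1: "gauss_ball (T :: 'a::euclidean_space itself) r \<le> 1"
  unfolding gauss_ball_def by (rule std_gauss.prob_le_1)

lemma gauss_ball_shell_bounds:
  fixes T :: "'a::euclidean_space itself"
  assumes r: "0 \<le> r" "r \<le> r'"
  shows "gauss_radial DIM('a) r' * (ball_volume DIM('a) r' - ball_volume DIM('a) r)
           \<le> gauss_ball T r' - gauss_ball T r"
    and "gauss_ball T r' - gauss_ball T r
           \<le> gauss_radial DIM('a) r * (ball_volume DIM('a) r' - ball_volume DIM('a) r)"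
proof -
  let ?S = "cball (0::'a) r' - cball 0 r"
  have "gauss_ball T r' - gauss_ball T r = measure std_gauss ?S"
    unfolding gauss_ball_def using r by (subst std_gauss.finite_measure_Diff) auto
  then have em: "emeasure std_gauss ?S = ennreal (gauss_ball T r' - gauss_ball T r)"
    and nonneg: "0 \<le> gauss_ball T r' - gauss_ball T r"
    by (simp_all add: std_gauss.emeasure_eq_measure)
  have vol: "0 \<le> ball_volume DIM('a) r' - ball_volume DIM('a) r"
    using ball_volume_mono[OF r] by simp
  have S: "?S \<in> sets borel" and norm_S: "\<And>x. x \<in> ?S \<Longrightarrow> r \<le> norm x \<and> norm x \<le> r'"
    by auto
  note bounds = emeasure_std_gauss_bounds[OF S r(1) norm_S, unfolded em emeasure_lborel_shell[OF r]]
  show "gauss_radial DIM('a) r' * (ball_volume DIM('a) r' - ball_volume DIM('a) r)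
      \<le> gauss_ball T r' - gauss_ball T r"
    using bounds(1) nonneg vol gauss_radial_pos[of "DIM('a)" r']
    by (simp add: ennreal_mult[symmetric] ennreal_le_iff)
  show "gauss_ball T r' - gauss_ball T r
      \<le> gauss_radial DIM('a) r * (ball_volume DIM('a) r' - ball_volume DIM('a) r)"
    using bounds(2) vol gauss_radial_pos[of "DIM('a)" r]
    by (simp add: ennreal_mult[symmetric] ennreal_le_iff)
qed

lemma gauss_ball_zero [simp]: "gauss_ball (T :: 'a::euclidean_space itself) 0 = 0"
proof -
  have "emeasure (std_gauss :: 'a measure) (cball 0 0)
      \<le> ennreal (gauss_radial DIM('a) 0) * emeasure lborel (cball (0::'a) 0)"
    by (rule emeasure_std_gauss_bounds(2)) auto
  then show ?thesis
    by (simp add: gauss_ball_def emeasure_cball std_gauss.emeasure_eq_measure)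
qed

lemma gauss_ball_strict_mono:
  fixes T :: "'a::euclidean_space itself"
  assumes "0 \<le> r" "r < r'"
  shows "gauss_ball T r < gauss_ball T r'"
proof -
  have "0 < gauss_radial DIM('a) r' * (ball_volume DIM('a) r' - ball_volume DIM('a) r)"
    using assms gauss_radial_pos ball_volume_strict_mono[OF assms DIM_positive[where 'a='a]] by simp
  with gauss_ball_shell_bounds(1)[of r r' T] assms show ?thesis by linarith
qed

lemma gauss_ball_mono:
  "0 \<le> r \<Longrightarrow> r \<le> r' \<Longrightarrow> gauss_ball (T :: 'a::euclidean_space itself) r \<le> gauss_ball T r'"
  using gauss_ball_strict_mono[of r r' T] by (cases "r = r'") auto

lemma gauss_ball_pos: "0 < r \<Longrightarrow> 0 < gauss_ball (T :: 'a::euclidean_space itself) r"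
  using gauss_ball_strict_mono[of 0 r T] by simp

lemma gauss_ball_less_1: "gauss_ball (T :: 'a::euclidean_space itself) r < 1"
proof (cases "0 \<le> r")
  case True
  then show ?thesis
    using gauss_ball_strict_mono[of r "r + 1" T] gauss_ball_le_1[of T "r + 1"] by simp
next
  case False
  then show ?thesis by (simp add: gauss_ball_def)
qed

lemma gauss_ball_tendsto_0: "(gauss_ball (T :: 'a::euclidean_space itself) \<longlongrightarrow> 0) (at_right 0)"
proof (rule tendsto_sandwich[where f = "\<lambda>_. 0" and h = "\<lambda>r. gauss_radial DIM('a) 0 * ball_volume DIM('a) r"])
  show "\<forall>\<^sub>F r in at_right 0. gauss_ball T r \<le> gauss_radial DIM('a) 0 * ball_volume DIM('a) r"
    using eventually_at_right_less[of "0::real"]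
    by eventually_elim (use gauss_ball_shell_bounds(2)[of 0 _ T] in auto)
  have "((\<lambda>r. gauss_radial DIM('a) 0 * ball_volume DIM('a) r)
      \<longlongrightarrow> gauss_radial DIM('a) 0 * ball_volume DIM('a) 0) (at_right 0)"
    unfolding ball_volume_def by (intro tendsto_intros)
  then show "((\<lambda>r. gauss_radial DIM('a) 0 * ball_volume DIM('a) r) \<longlongrightarrow> 0) (at_right 0)"
    by simp
qed (simp_all add: gauss_ball_nonneg)

lemma increment_quotient_bounds:
  fixes G W E :: "real \<Rightarrow> real"
  assumes increment: "\<And>a b. 0 \<le> a \<Longrightarrow> a \<le> b \<Longrightarrow>
      E b * (W b - W a) \<le> G b - G a \<and> G b - G a \<le> E a * (W b - W a)"
    and W_mono: "\<And>a b. 0 \<le> a \<Longrightarrow> a \<le> b \<Longrightarrow> W a \<le> W b"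
    and "0 \<le> y" "0 \<le> r" "y \<noteq> r"
  shows "min (E y) (E r) * ((W y - W r) / (y - r)) \<le> (G y - G r) / (y - r)
    \<and> (G y - G r) / (y - r) \<le> max (E y) (E r) * ((W y - W r) / (y - r))"
proof -
  have swap: "(p - q) / (x - z) = (q - p) / (z - x)" for p q x z :: real
    by (metis minus_diff_eq minus_divide_divide)
  show ?thesis
    using assms(3-)
  proof (induction y r rule: linorder_wlog)
    case (le a b)
    then have ab: "0 \<le> a" "a < b" by auto
    let ?qW = "(W b - W a) / (b - a)"
    have "0 \<le> ?qW" and "E b * ?qW \<le> (G b - G a) / (b - a)" and "(G b - G a) / (b - a) \<le> E a * ?qW"
      using increment[of a b] W_mono[of a b] ab by (auto intro!: divide_right_mono)
    moreover from \<open>0 \<le> ?qW\<close>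
    have "min (E a) (E b) * ?qW \<le> E b * ?qW" "E a * ?qW \<le> max (E a) (E b) * ?qW"
      by (intro mult_right_mono; simp)+
    ultimately show ?case
      unfolding swap[of "W a"] swap[of "G a"] by linarith
  next
    case (sym a b)
    then have "min (E b) (E a) * ((W b - W a) / (b - a)) \<le> (G b - G a) / (b - a)
      \<and> (G b - G a) / (b - a) \<le> max (E b) (E a) * ((W b - W a) / (b - a))"
      by auto
    then show ?case
      unfolding swap[of "W a"] swap[of "G a"] min.commute[of "E b"] max.commute[of "E b"] .
  qed
qed

lemma DERIV_of_increment_bounds:
  fixes G W E :: "real \<Rightarrow> real"
  assumes increment: "\<And>a b. 0 \<le> a \<Longrightarrow> a \<le> b \<Longrightarrow>
      E b * (W b - W a) \<le> G b - G a \<and> G b - G a \<le> E a * (W b - W a)"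
    and W_mono: "\<And>a b. 0 \<le> a \<Longrightarrow> a \<le> b \<Longrightarrow> W a \<le> W b"
    and E: "isCont E r" and W: "(W has_real_derivative W') (at r)" and r: "0 < r"
  shows "(G has_real_derivative E r * W') (at r)"
proof -
  let ?qW = "\<lambda>y. (W y - W r) / (y - r)" and ?qG = "\<lambda>y. (G y - G r) / (y - r)"
  have "\<forall>\<^sub>F y in at r. 0 < y \<and> y \<noteq> r"
    using order_tendstoD(1)[OF tendsto_ident_at r] eventually_neq_at_within[of r r UNIV]
    by (rule eventually_conj)
  then have "\<forall>\<^sub>F y in at r. min (E y) (E r) * ?qW y \<le> ?qG y \<and> ?qG y \<le> max (E y) (E r) * ?qW y"
    by (rule eventually_mono, intro increment_quotient_bounds[OF increment W_mono]) (use r in auto)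
  then have bounds: "\<forall>\<^sub>F y in at r. min (E y) (E r) * ?qW y \<le> ?qG y"
      "\<forall>\<^sub>F y in at r. ?qG y \<le> max (E y) (E r) * ?qW y"
    unfolding eventually_conj_iff by blast+
  have qW: "(?qW \<longlongrightarrow> W') (at r)"
    using W by (simp add: has_field_derivative_iff)
  have E_at: "(E \<longlongrightarrow> E r) (at r)"
    using E by (simp add: isCont_def)
  have "(?qG \<longlongrightarrow> E r * W') (at r)"
  proof (rule tendsto_sandwich[OF bounds])
    show "((\<lambda>y. min (E y) (E r) * ?qW y) \<longlongrightarrow> E r * W') (at r)"
      using tendsto_mult[OF tendsto_min[OF E_at tendsto_const[of "E r"]] qW] by simp
    show "((\<lambda>y. max (E y) (E r) * ?qW y) \<longlongrightarrow> E r * W') (at r)"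
      using tendsto_mult[OF tendsto_max[OF E_at tendsto_const[of "E r"]] qW] by simp
  qed
  then show ?thesis
    by (simp add: has_field_derivative_iff)
qed

lemma has_real_derivative_gauss_ball:
  fixes T :: "'a::euclidean_space itself" and r :: real
  assumes "0 < r"
  shows "(gauss_ball T has_real_derivative
      gauss_radial DIM('a) r * (unit_ball_vol DIM('a) * (real DIM('a) * r ^ (DIM('a) - 1)))) (at r)"
proof (rule DERIV_of_increment_bounds[where W = "ball_volume DIM('a)"])
  show "isCont (gauss_radial DIM('a)) r"
    unfolding gauss_radial_def by (intro continuous_intros) simp
qed (use assms gauss_ball_shell_bounds[of _ _ T] ball_volume_mono has_real_derivative_ball_volume
     in simp_all)

lemma chi2_density_eq_gauss_radial:
  fixes y :: real and d :: nat
  assumes y: "0 < y" and d: "1 \<le> d"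
  shows "gauss_radial d (sqrt y) * (unit_ball_vol d * (real d * sqrt y ^ (d - 1))) * (inverse (sqrt y) / 2)
    = chi2_density d y"
proof -
  define h where "h = real d / 2"
  have h: "0 < h" using d by (simp add: h_def)
  have sqrt_pow: "sqrt y ^ (d - 1) * (inverse (sqrt y) / 2) = y powr (h - 1) / 2"
  proof -
    have "sqrt y ^ (d - 1) * sqrt y = sqrt y ^ d"
      using d by (metis Suc_diff_le diff_Suc_1 power_Suc2)
    also have "\<dots> = y powr h"
      using y by (simp add: h_def powr_half_sqrt[symmetric] powr_power)
    finally have "sqrt y ^ (d - 1) = y powr h / sqrt y"
      using y by (simp add: field_simps)
    then have "sqrt y ^ (d - 1) * (inverse (sqrt y) / 2) = y powr h / (sqrt y * sqrt y) / 2"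
      by (simp add: field_simps)
    also have "\<dots> = y powr (h - 1) / 2"
      using y by (simp add: powr_diff)
    finally show ?thesis .
  qed
  have two_pi: "(2 * pi) powr (- h) * pi powr h = 2 powr (- h)"
    by (simp add: powr_mult powr_minus field_simps)
  have Gamma_h: "Gamma (h + 1) = h * Gamma h"
    by (rule Gamma_plus1) (use h nonpos_Ints_nonpos in force)
  have "Gamma h > 0" using h by (simp add: Gamma_real_pos)
  have "gauss_radial d (sqrt y) * (unit_ball_vol d * (real d * sqrt y ^ (d - 1))) * (inverse (sqrt y) / 2)
      = (2 * pi) powr (- h) * exp (- y / 2) * (pi powr h / Gamma (h + 1)) * real d
          * (sqrt y ^ (d - 1) * (inverse (sqrt y) / 2))"
    using y by (simp add: gauss_radial_def unit_ball_vol_def h_def)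
  also have "\<dots> = ((2 * pi) powr (- h) * pi powr h) * exp (- y / 2) * (real d / (2 * h))
      * y powr (h - 1) / Gamma h"
    unfolding sqrt_pow Gamma_h using h \<open>Gamma h > 0\<close> by (simp add: field_simps)
  also have "\<dots> = chi2_density d y"
    unfolding two_pi using y h by (simp add: chi2_density_def h_def powr_minus field_simps)
  finally show ?thesis .
qed

lemma chi2_density_nonneg: "0 \<le> chi2_density d y"
  by (cases "d = 0") (auto simp: chi2_density_def intro!: divide_nonneg_pos Gamma_real_pos)

lemma isCont_chi2_density:
  assumes "0 < y" "1 \<le> d"
  shows "isCont (chi2_density d) y"
proof -
  have "\<forall>\<^sub>F z in nhds y. z \<in> {0<..}"
    using assms by (intro eventually_nhds_in_open) auto
  then have "isCont (chi2_density d) y \<longleftrightarrow> isCont (\<lambda>x. x powr (real d / 2 - 1) * exp (- x / 2)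
       / (2 powr (real d / 2) * Gamma (real d / 2))) y"
    by (intro isCont_cong) (auto elim!: eventually_mono simp: chi2_density_def)
  moreover have "0 < Gamma (real d / 2)"
    using assms by (intro Gamma_real_pos) auto
  ultimately show ?thesis
    using assms by (auto intro!: continuous_intros simp: less_imp_neq[symmetric])
qed

lemma chi2_cdf_eq_gauss_ball:
  fixes T :: "'a::euclidean_space itself"
  assumes x: "0 < x"
  shows "chi2_cdf DIM('a) x = gauss_ball T (sqrt x)"
proof -
  let ?F = "\<lambda>y. gauss_ball T (sqrt y)"
  have d: "1 \<le> DIM('a)"
    using DIM_positive[where 'a='a] by linarith
  have deriv: "DERIV ?F y :> chi2_density DIM('a) y" if "0 < y" for y
    using DERIV_chain2[OF has_real_derivative_gauss_ball DERIV_real_sqrt, of y T] that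
      chi2_density_eq_gauss_radial[OF that d] by simp
  have sqrt_at_right: "filterlim sqrt (at_right 0) (at_right (0::real))"
    by (intro tendsto_imp_filterlim_at_right tendsto_eq_intros)
       (auto intro: eventually_mono[OF eventually_at_right_less])
  have "(LBINT y=ereal 0..ereal x. chi2_density DIM('a) y) = ?F x - 0"
  proof (rule interval_integral_FTC_nonneg)
    show "((?F \<circ> real_of_ereal) \<longlongrightarrow> 0) (at_right (ereal 0))"
      unfolding ereal_tendsto_simps
      by (rule filterlim_compose[OF gauss_ball_tendsto_0 sqrt_at_right])
    have "isCont ?F x"
      using deriv[OF x] by (rule DERIV_isCont)
    then show "((?F \<circ> real_of_ereal) \<longlongrightarrow> ?F x) (at_left (ereal x))"
      unfolding ereal_tendsto_simps isCont_def by (rule tendsto_mono[OF at_le, rotated]) auto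
  qed (use x deriv isCont_chi2_density d chi2_density_nonneg in auto)
  then show ?thesis
    by (simp add: chi2_cdf_def zero_ereal_def)
qed

lemma chi2_cdf_inverse_square:
  assumes "0 < s"
  shows "chi2_cdf DIM('a::euclidean_space) (s powr (-2)) = gauss_ball (TYPE('a)) (1 / s)"
proof -
  have "s powr (-2) = (1 / s)\<^sup>2"
    using assms by (simp add: powr_minus_divide powr_numeral power_one_over)
  with assms show ?thesis
    using chi2_cdf_eq_gauss_ball[of "s powr (-2)" "TYPE('a)"] by simp
qed

lemma lawX_cball:
  assumes "t0 < t"
  shows "lawX t0 t (cball (0::'a::euclidean_space) R) = gauss_ball TYPE('a) (R / (t - t0))"
proof -
  have "{v \<in> space std_gauss. (t - t0) *\<^sub>R v \<in> cball 0 R} = cball (0::'a) (R / (t - t0))"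
  proof (intro set_eqI)
    fix v :: 'a
    have "norm ((t - t0) *\<^sub>R v) \<le> R \<longleftrightarrow> norm v \<le> R / (t - t0)"
      using assms by (simp add: pos_le_divide_eq mult.commute)
    then show "v \<in> {v \<in> space std_gauss. (t - t0) *\<^sub>R v \<in> cball 0 R} \<longleftrightarrow> v \<in> cball 0 (R / (t - t0))"
      by (simp only: mem_Collect_eq mem_cball_0 space_std_gauss UNIV_I simp_thms)
  qed
  then show ?thesis
    by (simp add: lawX_def gauss_ball_def)
qed

lemma lawXX_cball:
  assumes "t0 \<le> u" "u \<le> t"
  shows "lawXX t0 t u (cball (0::'a::euclidean_space) R) = lawX t0 t (cball (0::'a) R)"
proof -
  have "{v \<in> space std_gauss. (t - t0) *\<^sub>R v \<in> cball 0 R \<and> (u - t0) *\<^sub>R v \<in> cball 0 R}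
      = {v \<in> space std_gauss. (t - t0) *\<^sub>R v \<in> cball (0::'a) R}"
  proof (intro Collect_cong conj_cong refl)
    fix v :: 'a
    have "\<bar>u - t0\<bar> * norm v \<le> \<bar>t - t0\<bar> * norm v"
      using assms by (intro mult_right_mono) auto
    then show "(t - t0) *\<^sub>R v \<in> cball 0 R \<and> (u - t0) *\<^sub>R v \<in> cball 0 R \<longleftrightarrow> (t - t0) *\<^sub>R v \<in> cball 0 R"
      unfolding mem_cball_0 norm_scaleR by linarith
  qed
  then show ?thesis
    by (simp only: lawX_def lawXX_def)
qed

lemma condlaw_cball:
  assumes "t0 < u" "u \<le> t"
  shows "condlaw t0 t u (cball (0::'a::euclidean_space) R)
    = gauss_ball TYPE('a) (R / (t - t0)) / gauss_ball TYPE('a) (R / (u - t0))"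
  using assms by (simp add: condlaw_def lawXX_cball lawX_cball)

definition solves_volterra ::
    "real \<Rightarrow> real \<Rightarrow> (real \<Rightarrow> real) \<Rightarrow> (real \<Rightarrow> real \<Rightarrow> real) \<Rightarrow> (real \<Rightarrow> real) \<Rightarrow> bool" where
  "solves_volterra t0 \<alpha> L C f \<longleftrightarrow> (\<forall>t>t0. set_integrable lborel {t0<..<t} (\<lambda>u. C t u * f u)
     \<and> f t = \<alpha> * L t - \<alpha> * (LBINT u=t0..t. C t u * f u))"

lemma interval_integral_exp_decay:
  fixes a b \<alpha> t0 :: real
  assumes "a \<le> b"
  shows "(LBINT u=a..b. \<alpha> * exp (- \<alpha> * (u - t0))) = exp (- \<alpha> * (a - t0)) - exp (- \<alpha> * (b - t0))"
proof -
  have "(LBINT u=a..b. \<alpha> * exp (- \<alpha> * (u - t0))) = (- exp (- \<alpha> * (b - t0))) - (- exp (- \<alpha> * (a - t0)))"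
    using assms
    by (intro interval_integral_FTC_finite)
       (auto intro!: continuous_intros derivative_eq_intros
         simp: has_real_derivative_iff_has_vector_derivative[symmetric])
  then show ?thesis by simp
qed

lemma set_integral_exp_decay_tail:
  fixes a \<alpha> t0 :: real
  assumes "0 < \<alpha>"
  shows "set_integrable lborel {a<..} (\<lambda>u. \<alpha> * exp (- \<alpha> * (u - t0)))"
    and "(LBINT u:{a<..}. \<alpha> * exp (- \<alpha> * (u - t0))) = exp (- \<alpha> * (a - t0))"
proof -
  let ?F = "\<lambda>u. - exp (- \<alpha> * (u - t0))"
  have decay: "((\<lambda>u. exp (- \<alpha> * (u - t0))) \<longlongrightarrow> 0) at_top"
    using assms by real_asymp
  have deriv: "DERIV ?F u :> \<alpha> * exp (- \<alpha> * (u - t0))" for u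
    by (auto intro!: derivative_eq_intros)
  have limit_at_a: "((?F \<circ> real_of_ereal) \<longlongrightarrow> ?F a) (at_right (ereal a))"
    unfolding ereal_tendsto_simps by (intro tendsto_intros)
  have limit_at_infinity: "((?F \<circ> real_of_ereal) \<longlongrightarrow> 0) (at_left \<infinity>)"
    unfolding ereal_tendsto_simps using tendsto_minus[OF decay] by simp
  have "set_integrable lborel (einterval (ereal a) \<infinity>) (\<lambda>u. \<alpha> * exp (- \<alpha> * (u - t0)))"
    "(LBINT u=ereal a..\<infinity>. \<alpha> * exp (- \<alpha> * (u - t0))) = 0 - ?F a"
    using interval_integral_FTC_nonneg[OF _ deriv _ _ limit_at_a limit_at_infinity] assms by auto
  then show "set_integrable lborel {a<..} (\<lambda>u. \<alpha> * exp (- \<alpha> * (u - t0)))"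
    and "(LBINT u:{a<..}. \<alpha> * exp (- \<alpha> * (u - t0))) = exp (- \<alpha> * (a - t0))"
    by (simp_all add: interval_lebesgue_integral_le_eq)
qed

lemma DERIV_interval_integral_upper:
  fixes h :: "real \<Rightarrow> real"
  assumes cont: "continuous_on {a<..} h"
    and integrable: "\<And>t. a < t \<Longrightarrow> set_integrable lborel {a<..<t} h"
    and x: "a < x"
  shows "DERIV (\<lambda>t. LBINT u=a..t. h u) x :> h x"
proof -
  define c where "c = (a + x) / 2"
  have c: "a < c" "c < x" using x by (auto simp: c_def)
  have split: "(LBINT u=a..t. h u) = (LBINT u=a..c. h u) + (LBINT u=c..t. h u)" if "c \<le> t" for t
  proof -
    have "interval_lebesgue_integrable lborel (min (ereal a) (min (ereal c) (ereal t)))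
        (max (ereal a) (max (ereal c) (ereal t))) h"
      using c that integrable[of t] by (simp add: interval_lebesgue_integrable_def min_def max_def)
    from interval_integral_sum[OF this] show ?thesis by simp
  qed
  have "((\<lambda>t. LBINT u=c..t. h u) has_vector_derivative h x) (at x within {c..x + 1})"
    using c by (intro interval_integral_FTC2 continuous_on_subset[OF cont]) auto
  then have "DERIV (\<lambda>t. LBINT u=c..t. h u) x :> h x"
    using c by (simp add: at_within_Icc_at has_real_derivative_iff_has_vector_derivative)
  then have "DERIV (\<lambda>t. (LBINT u=a..c. h u) + (LBINT u=c..t. h u)) x :> h x"
    by (auto intro!: derivative_eq_intros)
  moreover have "\<forall>\<^sub>F t in nhds x. (LBINT u=a..t. h u) = (LBINT u=a..c. h u) + (LBINT u=c..t. h u)"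
    using eventually_nhds_in_open[of "{c<..}" x] c by (auto elim!: eventually_mono intro: split)
  ultimately show ?thesis
    by (subst DERIV_cong_ev[OF refl _ refl])
qed

lemma volterra_exp_unique:
  fixes h :: "real \<Rightarrow> real"
  assumes cont: "continuous_on {t0<..} h"
    and integrable: "\<And>t. t0 < t \<Longrightarrow> set_integrable lborel {t0<..<t} h"
    and eq: "\<And>t. t0 < t \<Longrightarrow> h t = \<alpha> - \<alpha> * (LBINT u=t0..t. h u)"
    and t: "t0 < t"
  shows "h t = \<alpha> * exp (- \<alpha> * (t - t0))"
proof -
  define H where "H t = (LBINT u=t0..t. h u)" for t :: real
  \<comment> \<open>The equation says \<open>H' = \<alpha> (1 - H)\<close>, so \<open>Q\<close> is constant.\<close>
  define Q where "Q t = (1 - H t) * exp (\<alpha> * (t - t0))" for t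
  have "DERIV Q x :> 0" if "t0 < x" for x
  proof -
    have "DERIV Q x :> (- h x) * exp (\<alpha> * (x - t0)) + exp (\<alpha> * (x - t0)) * \<alpha> * (1 - H x)"
      unfolding Q_def H_def
      using DERIV_interval_integral_upper[OF cont integrable that]
      by (auto intro!: derivative_eq_intros)
    then show ?thesis
      using eq[OF that] by (simp add: H_def algebra_simps)
  qed
  then obtain c where c: "\<And>x. t0 < x \<Longrightarrow> Q x = c"
    using has_field_derivative_zero_constant[of "{t0<..}" Q]
    by (auto simp: at_within_open[of _ "{t0<..}"])
  have H: "1 - H x = c * exp (- \<alpha> * (x - t0))" if "t0 < x" for x
  proof -
    have "1 - H x = Q x * exp (- \<alpha> * (x - t0))"
      by (simp add: Q_def mult.assoc exp_add[symmetric])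
    then show ?thesis
      using c[OF that] by simp
  qed
  have h: "h x = c * (\<alpha> * exp (- \<alpha> * (x - t0)))" if "t0 < x" for x
  proof -
    have "h x = \<alpha> * (1 - H x)"
      using eq[OF that] by (simp add: H_def algebra_simps)
    then show ?thesis
      unfolding H[OF that] by simp
  qed
  have "H (t0 + 1) = (LBINT u=t0..t0 + 1. c * (\<alpha> * exp (- \<alpha> * (u - t0))))"
    unfolding H_def by (intro interval_integral_cong) (auto simp: h)
  also have "\<dots> = c * (1 - exp (- \<alpha>))"
    by (subst interval_lebesgue_integral_mult_right, subst interval_integral_exp_decay) auto
  finally have "c = 1"
    using H[of "t0 + 1"] by (simp add: algebra_simps)
  then show ?thesis
    using h[OF t] by simp
qed

lemma solves_volterra_ratio_kernel:
  fixes g L :: "real \<Rightarrow> real" and C :: "real \<Rightarrow> real \<Rightarrow> real"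
  assumes g_pos: "\<And>t. t0 < t \<Longrightarrow> 0 < g t"
    and L: "\<And>t. t0 < t \<Longrightarrow> L t = g t"
    and C: "\<And>t u. t0 < u \<Longrightarrow> u < t \<Longrightarrow> C t u = g t / g u"
  shows "solves_volterra t0 \<alpha> L C (\<lambda>t. \<alpha> * exp (- \<alpha> * (t - t0)) * g t)"
  unfolding solves_volterra_def
proof (intro allI impI conjI)
  fix t assume t: "t0 < t"
  let ?k = "\<lambda>u. g t * (\<alpha> * exp (- \<alpha> * (u - t0)))"
  have kernel: "C t u * (\<alpha> * exp (- \<alpha> * (u - t0)) * g u) = ?k u" if "u \<in> {t0<..<t}" for u
    using that C[of u t] g_pos[of u] by auto
  have "set_integrable lborel {t0..t} ?k"
    by (intro borel_integrable_atLeastAtMost' continuous_intros)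
  then have "set_integrable lborel {t0<..<t} ?k"
    by (rule set_integrable_subset) auto
  then show "set_integrable lborel {t0<..<t} (\<lambda>u. C t u * (\<alpha> * exp (- \<alpha> * (u - t0)) * g u))"
    by (subst set_integrable_cong[OF refl refl kernel]) auto
  have "(LBINT u=t0..t. C t u * (\<alpha> * exp (- \<alpha> * (u - t0)) * g u)) = (LBINT u=t0..t. ?k u)"
    using t by (intro interval_integral_cong kernel) auto
  also have "\<dots> = g t * (1 - exp (- \<alpha> * (t - t0)))"
    using t by (subst interval_lebesgue_integral_mult_right, subst interval_integral_exp_decay) auto
  finally have integral: "(LBINT u=t0..t. C t u * (\<alpha> * exp (- \<alpha> * (u - t0)) * g u))
      = g t * (1 - exp (- \<alpha> * (t - t0)))" .
  show "\<alpha> * exp (- \<alpha> * (t - t0)) * g t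
      = \<alpha> * L t - \<alpha> * (LBINT u=t0..t. C t u * (\<alpha> * exp (- \<alpha> * (u - t0)) * g u))"
    unfolding integral L[OF t] by (simp add: algebra_simps)
qed

lemma solves_volterra_ratio_kernel_unique:
  fixes f g L :: "real \<Rightarrow> real" and C :: "real \<Rightarrow> real \<Rightarrow> real"
  assumes g_cont: "continuous_on {t0<..} g"
    and g_pos: "\<And>t. t0 < t \<Longrightarrow> 0 < g t"
    and L: "\<And>t. t0 < t \<Longrightarrow> L t = g t"
    and C: "\<And>t u. t0 < u \<Longrightarrow> u < t \<Longrightarrow> C t u = g t / g u"
    and f_cont: "continuous_on {t0<..} f"
    and f: "solves_volterra t0 \<alpha> L C f"
    and t: "t0 < t"
  shows "f t = \<alpha> * exp (- \<alpha> * (t - t0)) * g t"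
proof -
  \<comment> \<open>Dividing by \<open>g t\<close> turns the equation into one with constant kernel.\<close>
  define h where "h u = f u / g u" for u
  have kernel: "C t u * f u = g t * h u" if "t0 < u" "u < t" for t u
    using that C[of u t] g_pos[of u] by (simp add: h_def)
  have h_integrable: "set_integrable lborel {t0<..<t} h" if t: "t0 < t" for t
  proof -
    have "set_integrable lborel {t0<..<t} (\<lambda>u. C t u * f u)"
      using f t by (simp add: solves_volterra_def)
    then have "set_integrable lborel {t0<..<t} (\<lambda>u. g t * h u)"
      by (subst set_integrable_cong[OF refl refl, of _ _ "\<lambda>u. C t u * f u"]) (auto simp: kernel)
    then show ?thesis
      using g_pos[OF t] by simp
  qed
  have "h t = \<alpha> - \<alpha> * (LBINT u=t0..t. h u)" if t: "t0 < t" for t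
  proof -
    have "(LBINT u=t0..t. C t u * f u) = g t * (LBINT u=t0..t. h u)"
      using t by (subst interval_integral_cong[where g = "\<lambda>u. g t * h u"]) (auto simp: kernel)
    then have "f t = \<alpha> * g t - \<alpha> * (g t * (LBINT u=t0..t. h u))"
      using f t L[OF t] by (simp add: solves_volterra_def)
    then show ?thesis
      using g_pos[OF t] by (simp add: h_def field_simps)
  qed
  moreover have "continuous_on {t0<..} h"
    unfolding h_def using g_pos by (intro continuous_intros f_cont g_cont) fastforce
  ultimately have "h t = \<alpha> * exp (- \<alpha> * (t - t0))"
    using volterra_exp_unique h_integrable t by blast
  then show ?thesis
    using g_pos[OF t] by (simp add: h_def field_simps)
qed

lemma exp_decay_weighted_integral_less_1:
  fixes g :: "real \<Rightarrow> real"
  assumes \<alpha>: "0 < \<alpha>" and g_cont: "continuous_on {t0<..} g"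
    and g_bounds: "\<And>t. t0 < t \<Longrightarrow> 0 \<le> g t \<and> g t \<le> 1"
    and s: "t0 \<le> s" and g_small: "\<And>t. s < t \<Longrightarrow> g t \<le> c" and c: "c < 1"
  shows "set_integrable lborel {t0<..} (\<lambda>t. \<alpha> * exp (- \<alpha> * (t - t0)) * g t)"
    and "(LBINT t:{t0<..}. \<alpha> * exp (- \<alpha> * (t - t0)) * g t) < 1"
proof -
  let ?k = "\<lambda>t. \<alpha> * exp (- \<alpha> * (t - t0))" and ?f = "\<lambda>t. \<alpha> * exp (- \<alpha> * (t - t0)) * g t"
  have k: "set_integrable lborel {t0<..} ?k" "(LBINT t:{t0<..}. ?k t) = 1"
    using set_integral_exp_decay_tail[OF \<alpha>, of t0 t0] by auto
  have f_le_k: "0 \<le> ?f t \<and> ?f t \<le> ?k t" if "t0 < t" for t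
    using g_bounds[OF that] \<alpha> by (auto intro: mult_left_le)
  have "continuous_on {t0<..} ?f"
    by (intro continuous_intros g_cont)
  from borel_measurable_continuous_on_indicator[OF _ this]
  have "set_borel_measurable lborel {t0<..} ?f"
    unfolding set_borel_measurable_def by simp
  then show f: "set_integrable lborel {t0<..} ?f"
    using f_le_k \<alpha> by (intro set_integrable_bound[OF k(1)]) (auto intro!: AE_I2)
  \<comment> \<open>On \<open>(s, \<infinity>)\<close> the integrand falls short of the probability density \<open>?k\<close> by \<open>(1 - c) ?k\<close>.\<close>
  let ?l = "\<lambda>t. (1 - c) * (indicator {s<..} t * ?k t)"
  have restrict: "indicator {t0<..} t *\<^sub>R (indicator {s<..} t * ?k t) = indicator {s<..} t *\<^sub>R ?k t"
    for t :: real
    using s by (auto simp: indicator_def)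
  have tail: "set_integrable lborel {s<..} ?k" "(LBINT t:{s<..}. ?k t) = exp (- \<alpha> * (s - t0))"
    using set_integral_exp_decay_tail[OF \<alpha>, of s t0] by auto
  have "set_integrable lborel {t0<..} (\<lambda>t. indicator {s<..} t * ?k t)"
    using tail(1) unfolding set_integrable_def restrict .
  then have l: "set_integrable lborel {t0<..} ?l"
    by (rule set_integrable_mult_right)
  have "(LBINT t:{t0<..}. indicator {s<..} t * ?k t) = (LBINT t:{s<..}. ?k t)"
    unfolding set_lebesgue_integral_def restrict ..
  then have "(1 - c) * exp (- \<alpha> * (s - t0)) = (LBINT t:{t0<..}. ?l t)"
    using tail(2) by simp
  also have "\<dots> \<le> (LBINT t:{t0<..}. ?k t - ?f t)"
  proof (rule set_integral_mono[OF l set_integral_diff(1)[OF k(1) f]])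
    fix t assume t: "t \<in> {t0<..}"
    show "?l t \<le> ?k t - ?f t"
    proof (cases "s < t")
      case True
      have "(1 - c) * ?k t \<le> (1 - g t) * ?k t"
        using g_small[OF True] \<alpha> by (intro mult_right_mono) auto
      then show ?thesis
        using True by (simp add: algebra_simps)
    qed (use f_le_k t in auto)
  qed
  also have "\<dots> = 1 - (LBINT t:{t0<..}. ?f t)"
    using set_integral_diff(2)[OF k(1) f] k(2) by simp
  finally have "(1 - c) * exp (- \<alpha> * (s - t0)) \<le> 1 - (LBINT t:{t0<..}. ?f t)" .
  moreover have "0 < (1 - c) * exp (- \<alpha> * (s - t0))"
    using c by simp
  ultimately show "(LBINT t:{t0<..}. ?f t) < 1"
    by linarith
qed

theorem mainTheorem13:
  fixes t0 \<alpha> :: real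
  defines "Dc \<equiv> cball (0::'a::euclidean_space) 1"
  defines "f0 \<equiv> (\<lambda>t. \<alpha> * exp (- \<alpha> * (t - t0)) * chi2_cdf DIM('a) ((t - t0) powr (-2)))"
  assumes "\<alpha> > 0"
  shows "continuous_on {t0<..} f0
     \<and> (\<forall>t>t0. set_integrable lborel {t0<..<t} (\<lambda>u. condlaw t0 t u Dc * f0 u)
               \<and> f0 t = \<alpha> * lawX t0 t Dc - \<alpha> * (LBINT u=t0..t. condlaw t0 t u Dc * f0 u))
     \<and> (\<forall>f. continuous_on {t0<..} f
           \<and> (\<forall>t>t0. set_integrable lborel {t0<..<t} (\<lambda>u. condlaw t0 t u Dc * f u)
               \<and> f t = \<alpha> * lawX t0 t Dc - \<alpha> * (LBINT u=t0..t. condlaw t0 t u Dc * f u))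
           \<longrightarrow> (\<forall>t>t0. f t = f0 t))
     \<and> set_integrable lborel {t0<..} f0
     \<and> (LBINT t:{t0<..}. f0 t) < 1"
proof -
  define g where "g t = chi2_cdf DIM('a) ((t - t0) powr (-2))" for t
  have f0_g: "f0 = (\<lambda>t. \<alpha> * exp (- \<alpha> * (t - t0)) * g t)"
    by (simp add: f0_def g_def)
  have g_ball: "g t = gauss_ball TYPE('a) (1 / (t - t0))" if "t0 < t" for t
    using that by (simp add: g_def chi2_cdf_inverse_square)
  have "continuous_on {t0<..} (\<lambda>t. gauss_ball TYPE('a) (1 / (t - t0)))"
    by (intro continuous_at_imp_continuous_on ballI isCont_o2[OF _ DERIV_isCont[OF has_real_derivative_gauss_ball]])
       (auto intro!: continuous_intros)
  then have g_cont: "continuous_on {t0<..} g"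
    by (rule continuous_on_cong[THEN iffD1, rotated 2]) (auto simp: g_ball)
  have g_pos: "0 < g t" and g_le_1: "g t \<le> 1" if "t0 < t" for t
    using that by (simp_all add: g_ball gauss_ball_pos gauss_ball_le_1)
  have g_small: "g t \<le> gauss_ball TYPE('a) 1" if "t0 + 1 < t" for t
    using that by (simp add: g_ball gauss_ball_mono divide_le_eq)
  have L: "lawX t0 t Dc = g t" if "t0 < t" for t
    using that by (simp add: Dc_def lawX_cball g_ball)
  have C: "condlaw t0 t u Dc = g t / g u" if "t0 < u" "u < t" for t u
    using that by (simp add: Dc_def condlaw_cball g_ball)
  have "solves_volterra t0 \<alpha> (\<lambda>t. lawX t0 t Dc) (\<lambda>t u. condlaw t0 t u Dc) f0"
    unfolding f0_g using g_pos L C by (rule solves_volterra_ratio_kernel)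
  moreover have "\<forall>t>t0. f t = f0 t"
    if "continuous_on {t0<..} f" "solves_volterra t0 \<alpha> (\<lambda>t. lawX t0 t Dc) (\<lambda>t u. condlaw t0 t u Dc) f"
    for f
    unfolding f0_g using solves_volterra_ratio_kernel_unique[OF g_cont g_pos L C that] by blast
  moreover have "continuous_on {t0<..} f0"
    unfolding f0_g by (intro continuous_intros g_cont)
  moreover have "set_integrable lborel {t0<..} f0" "(LBINT t:{t0<..}. f0 t) < 1"
    unfolding f0_g using g_pos g_le_1 g_small gauss_ball_less_1
    by (intro exp_decay_weighted_integral_less_1[OF \<open>\<alpha> > 0\<close> g_cont, of "t0 + 1"]; force)+
  ultimately show ?thesis
    unfolding solves_volterra_def by blast
qed

end
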